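(* Let $G=(V,E)$ be a connected simple graph. Then $G^{(\pi)}$ is a tree for every injection $\pi:V\to\mathbb{N}$ if and only if every biconnected component of $G$ is a clique.
   Context: For a vertex $u$, $N(u)=\{v\in V: uv\in E\}$ is its open neighbourhood. Given an injection $\pi:V\to\mathbb{N}$, an ordered pair $(u,v)\in V^2$ is called good with respect to $\pi$ if $uv\in E$, $\pi(u)<\pi(v)$, and $\pi(u)<\pi(w)$ for every $w\in N(u)\cap N(v)$. The graph $G^{(\pi)}=(V,E^{(\pi)})$ is the spanning subgraph of $G$ with edge set $E^{(\pi)}=\{\{u,v\}: (u,v)\text{ is good with respect to }\pi\}$. A biconnected component (block) of $G$ is a maximal connected subgraph of $G$ that has no cut vertex of its own; a bridge with its endpoints is a biconnected component isomorphic to $K_2$. *)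

theory Defs
  imports Main
begin

definition simple_graph :: "'a set \<Rightarrow> 'a set set \<Rightarrow> bool" where
  "simple_graph V E \<longleftrightarrow> (\<forall>e\<in>E. \<exists>u v. e = {u, v} \<and> u \<noteq> v \<and> u \<in> V \<and> v \<in> V)"

definition nbhd :: "'a set \<Rightarrow> 'a set set \<Rightarrow> 'a \<Rightarrow> 'a set" where
  "nbhd V E u = {v \<in> V. {u, v} \<in> E}"

definition reach :: "'a set set \<Rightarrow> 'a \<Rightarrow> 'a \<Rightarrow> bool" where
  "reach F = (\<lambda>x y. {x, y} \<in> F)\<^sup>*\<^sup>*"

definition connected_graph :: "'a set \<Rightarrow> 'a set set \<Rightarrow> bool" where
  "connected_graph V F \<longleftrightarrow> V \<noteq> {} \<and> (\<forall>u\<in>V. \<forall>v\<in>V. reach F u v)"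

definition has_cycle :: "'a set set \<Rightarrow> bool" where
  "has_cycle F \<longleftrightarrow> (\<exists>xs. length xs \<ge> 3 \<and> distinct xs \<and>
     (\<forall>i < length xs - 1. {xs ! i, xs ! (i + 1)} \<in> F) \<and> {last xs, hd xs} \<in> F)"

definition is_tree :: "'a set \<Rightarrow> 'a set set \<Rightarrow> bool" where
  "is_tree V F \<longleftrightarrow> connected_graph V F \<and> \<not> has_cycle F"

definition good :: "'a set \<Rightarrow> 'a set set \<Rightarrow> ('a \<Rightarrow> nat) \<Rightarrow> 'a \<Rightarrow> 'a \<Rightarrow> bool" where
  "good V E \<pi> u v \<longleftrightarrow> {u, v} \<in> E \<and> \<pi> u < \<pi> v \<and>
     (\<forall>w \<in> nbhd V E u \<inter> nbhd V E v. \<pi> u < \<pi> w)"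

definition pi_edges :: "'a set \<Rightarrow> 'a set set \<Rightarrow> ('a \<Rightarrow> nat) \<Rightarrow> 'a set set" where
  "pi_edges V E \<pi> = {{u, v} | u v. good V E \<pi> u v}"

definition subgraph :: "'a set \<Rightarrow> 'a set set \<Rightarrow> 'a set \<Rightarrow> 'a set set \<Rightarrow> bool" where
  "subgraph W F V E \<longleftrightarrow> W \<subseteq> V \<and> F \<subseteq> E \<and> (\<forall>e\<in>F. e \<subseteq> W)"

definition has_cut_vertex :: "'a set \<Rightarrow> 'a set set \<Rightarrow> bool" where
  "has_cut_vertex W F \<longleftrightarrow> (\<exists>x\<in>W. \<exists>u\<in>W - {x}. \<exists>v\<in>W - {x}.
      \<not> reach {e \<in> F. x \<notin> e} u v)"

definition biconn_candidate :: "'a set \<Rightarrow> 'a set set \<Rightarrow> bool" where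
  "biconn_candidate W F \<longleftrightarrow> connected_graph W F \<and> \<not> has_cut_vertex W F"

definition is_block :: "'a set \<Rightarrow> 'a set set \<Rightarrow> 'a set \<Rightarrow> 'a set set \<Rightarrow> bool" where
  "is_block V E W F \<longleftrightarrow> subgraph W F V E \<and> biconn_candidate W F \<and>
     (\<forall>W' F'. subgraph W' F' V E \<and> biconn_candidate W' F' \<and> W \<subseteq> W' \<and> F \<subseteq> F'
        \<longrightarrow> W' = W \<and> F' = F)"

definition is_clique :: "'a set \<Rightarrow> 'a set set \<Rightarrow> bool" where
  "is_clique W F \<longleftrightarrow> (\<forall>u\<in>W. \<forall>v\<in>W. u \<noteq> v \<longrightarrow> {u, v} \<in> F)"

end

theory Submission imports Defs begin

text \<open>
  If every block is a clique, G^(pi) is connected because an edge uv that is not good has a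
  common neighbour w with smaller label, and induction on labels joins w to both u and v.
  It is acyclic because a cycle of G^(pi) lies in one block, and in a clique block every good
  edge must contain the vertex of least label; three consecutive edges of a cycle share no vertex.

  Conversely, a block that is not a clique contains an induced path u - b - d. Labelling
  u, d, b with 0, 1 and the largest label makes ub and db good, while the block minus b still
  joins u to d inside G^(pi), which closes a cycle.
\<close>

lemma reach_refl [simp]: "reach F x x"
  unfolding reach_def by simp

lemma reach_edge: "{x, y} \<in> F \<Longrightarrow> reach F x y"
  unfolding reach_def by auto

lemma reach_trans: "reach F x y \<Longrightarrow> reach F y z \<Longrightarrow> reach F x z"
  unfolding reach_def by auto

lemma reach_sym: "reach F x y \<Longrightarrow> reach F y x"
  unfolding reach_def
proof (induction rule: rtranclp_induct)
  case (step y z)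
  have "{z, y} \<in> F" using step(2) by (simp add: insert_commute)
  then show ?case using step(3) by (rule converse_rtranclp_into_rtranclp)
qed simp

lemma reach_lift:
  assumes "\<And>x y. {x, y} \<in> F \<Longrightarrow> reach F' x y" and "reach F u v"
  shows "reach F' u v"
  using assms(2) unfolding reach_def
proof (induction rule: rtranclp_induct)
  case (step y z)
  then show ?case using assms(1)[of y z] unfolding reach_def by auto
qed simp

lemma reach_mono: "F \<subseteq> F' \<Longrightarrow> reach F u v \<Longrightarrow> reach F' u v"
  by (rule reach_lift) (auto intro: reach_edge)

lemma reach_along_nth:
  assumes "\<And>i. i < j \<Longrightarrow> {ys ! i, ys ! Suc i} \<in> F"
  shows "reach F (ys ! 0) (ys ! j)"
  using assms by (induction j) (auto intro: reach_trans reach_edge)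

lemma reach_imp_path:
  assumes "reach F x y"
  shows "\<exists>xs. xs \<noteq> [] \<and> hd xs = x \<and> last xs = y \<and> distinct xs
     \<and> successively (\<lambda>a b. {a, b} \<in> F) xs \<and> (\<forall>z\<in>set xs. z = x \<or> (\<exists>e\<in>F. z \<in> e))"
  using assms unfolding reach_def
proof (induction rule: converse_rtranclp_induct)
  case base
  show ?case by (intro exI[of _ "[y]"]) auto
next
  case (step x z)
  then obtain xs where xs: "xs \<noteq> []" "hd xs = z" "last xs = y" "distinct xs"
     "successively (\<lambda>a b. {a, b} \<in> F) xs" "\<forall>w\<in>set xs. w = z \<or> (\<exists>e\<in>F. w \<in> e)"
    by blast
  have z_in_edge: "\<exists>e\<in>F. z \<in> e" using step(1) by blast
  show ?case
  proof (cases "x \<in> set xs")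
    case True
    \<comment> \<open>the path returns to x: cut off the detour\<close>
    then obtain ys zs where xs_split: "xs = ys @ x # zs" by (meson split_list)
    have "successively (\<lambda>a b. {a, b} \<in> F) (x # zs)"
      using xs(5) xs_split by (simp add: successively_append_iff)
    moreover have "\<forall>w\<in>set (x # zs). w = x \<or> (\<exists>e\<in>F. w \<in> e)"
      using xs(6) xs_split z_in_edge by auto
    ultimately show ?thesis
      using xs(3,4) xs_split by (intro exI[of _ "x # zs"]) simp
  next
    case False
    show ?thesis
      using xs False step(1) z_in_edge
      by (intro exI[of _ "x # xs"]) (auto simp: successively_Cons)
  qed
qed

lemma has_cycle_if_reach_avoiding:
  assumes reach: "reach {e \<in> P. b \<notin> e} a d" and "a \<noteq> d"
    and ab: "{a, b} \<in> P" and bd: "{b, d} \<in> P" and "b \<noteq> a" "b \<noteq> d"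
  shows "has_cycle P"
proof -
  obtain xs where xs: "xs \<noteq> []" "hd xs = a" "last xs = d" "distinct xs"
    "successively (\<lambda>x y. {x, y} \<in> {e \<in> P. b \<notin> e}) xs"
    "\<forall>z\<in>set xs. z = a \<or> (\<exists>e\<in>{e \<in> P. b \<notin> e}. z \<in> e)"
    using reach_imp_path[OF reach] by blast
  have "b \<notin> set xs" using xs(6) \<open>b \<noteq> a\<close> by blast
  have "length xs \<ge> 2"
    using xs(1-3) \<open>a \<noteq> d\<close> by (cases xs; cases "tl xs") auto
  define ys where "ys = xs @ [b]"
  have path: "successively (\<lambda>x y. {x, y} \<in> P) ys"
    unfolding ys_def using xs(1,3,5) bd
    by (auto simp: successively_append_iff insert_commute elim: successively_mono)
  show ?thesis unfolding has_cycle_def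
  proof (intro exI[of _ ys] conjI allI impI)
    show "3 \<le> length ys" using \<open>length xs \<ge> 2\<close> unfolding ys_def by simp
    show "distinct ys" using \<open>b \<notin> set xs\<close> xs(4) unfolding ys_def by simp
    show "{ys ! i, ys ! (i + 1)} \<in> P" if "i < length ys - 1" for i
      using successively_nth[OF path, of i] that by simp
    show "{last ys, hd ys} \<in> P" using ab xs(1,2) unfolding ys_def by (simp add: insert_commute)
  qed
qed

subsection \<open>Connectivity of G^(pi)\<close>

lemma simple_graph_edgeD: "simple_graph V E \<Longrightarrow> {u, v} \<in> E \<Longrightarrow> u \<in> V \<and> v \<in> V \<and> u \<noteq> v"
  unfolding simple_graph_def by (metis doubleton_eq_iff)

lemma pi_edges_subset: "pi_edges V E \<pi> \<subseteq> E"
  unfolding pi_edges_def good_def by auto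

lemma good_imp_pi_edge: "good V E \<pi> u v \<Longrightarrow> {u, v} \<in> pi_edges V E \<pi>"
  unfolding pi_edges_def by blast

text \<open>
  The vertices in B carry maximal labels, so they never occur as the common neighbour w produced
  by the induction below: edges of G are joined in G^(pi) by paths avoiding B.
\<close>

lemma reach_pi_edges_avoiding_ordered:
  assumes sg: "simple_graph V E" and inj: "inj_on \<pi> V"
    and top: "\<forall>w\<in>B. \<forall>x\<in>V. \<pi> x \<le> \<pi> w"
  shows "{u, v} \<in> E \<Longrightarrow> u \<notin> B \<Longrightarrow> v \<notin> B \<Longrightarrow> \<pi> u < \<pi> v \<Longrightarrow>
     reach {e \<in> pi_edges V E \<pi>. e \<inter> B = {}} u v"
proof (induction "\<pi> u" arbitrary: u v rule: less_induct)
  case less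
  show ?case
  proof (cases "good V E \<pi> u v")
    case True
    then show ?thesis using less.prems(2,3) by (auto intro: reach_edge good_imp_pi_edge)
  next
    case False
    then obtain w where w: "w \<in> nbhd V E u" "w \<in> nbhd V E v" "\<not> \<pi> u < \<pi> w"
      using less.prems(1,4) unfolding good_def by blast
    have wu: "{w, u} \<in> E" and wv: "{w, v} \<in> E" and "w \<in> V"
      using w(1,2) unfolding nbhd_def by (simp_all add: insert_commute)
    have "u \<in> V" "w \<noteq> u" using simple_graph_edgeD[OF sg wu] by simp_all
    then have "\<pi> w \<noteq> \<pi> u" using inj_on_contraD[OF inj _ \<open>w \<in> V\<close>] by blast
    then have "\<pi> w < \<pi> u" using w(3) by linarith
    moreover have "w \<notin> B" using top \<open>u \<in> V\<close> \<open>\<pi> w < \<pi> u\<close> by fastforce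
    ultimately have "reach {e \<in> pi_edges V E \<pi>. e \<inter> B = {}} w u"
      and "reach {e \<in> pi_edges V E \<pi>. e \<inter> B = {}} w v"
      using less.hyps wu wv less.prems(2-4) by auto
    then show ?thesis by (blast intro: reach_trans reach_sym)
  qed
qed

lemma reach_pi_edges_avoiding:
  assumes sg: "simple_graph V E" and inj: "inj_on \<pi> V"
    and top: "\<forall>w\<in>B. \<forall>x\<in>V. \<pi> x \<le> \<pi> w"
    and uv: "{u, v} \<in> E" "u \<notin> B" "v \<notin> B"
  shows "reach {e \<in> pi_edges V E \<pi>. e \<inter> B = {}} u v"
proof -
  have "\<pi> u \<noteq> \<pi> v" using simple_graph_edgeD[OF sg uv(1)] inj_on_contraD[OF inj] by blast
  then consider "\<pi> u < \<pi> v" | "\<pi> v < \<pi> u" by linarith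
  then show ?thesis
  proof cases
    case 1
    then show ?thesis using reach_pi_edges_avoiding_ordered[OF sg inj top uv] by blast
  next
    case 2
    have "{v, u} \<in> E" using uv(1) by (simp add: insert_commute)
    then show ?thesis
      using reach_pi_edges_avoiding_ordered[OF sg inj top _ uv(3,2) 2] by (blast intro: reach_sym)
  qed
qed

lemma connected_pi_edges:
  assumes sg: "simple_graph V E" and inj: "inj_on \<pi> V" and conn: "connected_graph V E"
  shows "connected_graph V (pi_edges V E \<pi>)"
proof -
  have "reach (pi_edges V E \<pi>) x y" if "{x, y} \<in> E" for x y
    using reach_pi_edges_avoiding[OF sg inj, of "{}" x y] that by simp
  then have "reach (pi_edges V E \<pi>) u v" if "reach E u v" for u v
    using that by (rule reach_lift)
  then show ?thesis using conn unfolding connected_graph_def by blast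
qed

subsection \<open>A block that is not a clique\<close>

lemma block_contains_induced_edge:
  assumes block: "is_block V E W F" and uv: "u \<in> W" "v \<in> W" "{u, v} \<in> E"
  shows "{u, v} \<in> F"
proof (rule ccontr)
  assume "{u, v} \<notin> F"
  define F' where "F' = insert {u, v} F"
  have sub: "subgraph W F V E" and bc: "biconn_candidate W F"
    using block unfolding is_block_def by blast+
  have sub': "subgraph W F' V E" using sub uv unfolding F'_def subgraph_def by blast
  have "connected_graph W F'"
    using bc unfolding biconn_candidate_def connected_graph_def F'_def
    by (blast intro: reach_mono[of F])
  moreover have "\<not> has_cut_vertex W F'"
  proof
    assume "has_cut_vertex W F'"
    moreover have "{e \<in> F. x \<notin> e} \<subseteq> {e \<in> F'. x \<notin> e}" for x unfolding F'_def by blast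
    ultimately have "has_cut_vertex W F"
      unfolding has_cut_vertex_def by (meson reach_mono)
    then show False using bc unfolding biconn_candidate_def by blast
  qed
  ultimately have "biconn_candidate W F'" unfolding biconn_candidate_def by blast
  then have "F' = F" using block sub' unfolding is_block_def F'_def by blast
  then show False using \<open>{u, v} \<notin> F\<close> unfolding F'_def by blast
qed

text \<open>Walking from u towards a non-neighbour v, the first vertex outside N(u) gives the path.\<close>

lemma exists_induced_two_path:
  assumes sub: "subgraph W F V E" and reach: "reach F u v" and "{u, v} \<notin> E" "u \<noteq> v"
  shows "\<exists>b d. b \<in> W \<and> d \<in> W \<and> {u, b} \<in> E \<and> {b, d} \<in> E \<and> {u, d} \<notin> E \<and> u \<noteq> d"
proof -
  have FE: "F \<subseteq> E" and FW: "\<forall>e\<in>F. e \<subseteq> W" using sub unfolding subgraph_def by auto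
  have "(\<exists>b d. b \<in> W \<and> d \<in> W \<and> {u, b} \<in> E \<and> {b, d} \<in> E \<and> {u, d} \<notin> E \<and> u \<noteq> d)
        \<or> {u, z} \<in> E \<or> z = u" if "reach F u z" for z
    using that unfolding reach_def
  proof (induction rule: rtranclp_induct)
    case (step y z)
    have "{y, z} \<in> E" "y \<in> W" "z \<in> W" using step(2) FE FW by auto
    then show ?case using step(3) by (cases "{u, z} \<in> E \<or> z = u") auto
  qed simp
  then show ?thesis using assms by blast
qed

lemma exists_labelling_with_prescribed_ends:
  assumes "finite V" and "a \<noteq> d" "b \<noteq> a" "b \<noteq> d"
  shows "\<exists>\<pi> :: 'a \<Rightarrow> nat. inj_on \<pi> V \<and> \<pi> a = 0 \<and> \<pi> d = 1 \<and> (\<forall>x\<in>V. \<pi> x \<le> \<pi> b)"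
proof -
  obtain f n where f: "f ` V = {i::nat. i < n}" "inj_on f V"
    using finite_imp_inj_to_nat_seg[OF \<open>finite V\<close>] by blast
  define \<pi> where "\<pi> x = (if x = a then 0 else if x = d then 1 else if x = b then n + 2 else f x + 2)"
    for x
  have f_less: "x \<in> V \<Longrightarrow> f x < n" for x using f(1) by blast
  have "inj_on \<pi> V"
    unfolding inj_on_def \<pi>_def using f(2) f_less assms(2-4) by (auto simp: inj_on_eq_iff)
  moreover have "\<forall>x\<in>V. \<pi> x \<le> \<pi> b" unfolding \<pi>_def using f_less assms(3,4) by fastforce
  ultimately show ?thesis using assms(2-4) by (intro exI[of _ \<pi>]) (simp add: \<pi>_def)
qed

lemma nonclique_block_imp_not_tree:
  assumes fin: "finite V" and sg: "simple_graph V E" and block: "is_block V E W F"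
    and "\<not> is_clique W F"
  shows "\<exists>\<pi> :: 'a \<Rightarrow> nat. inj_on \<pi> V \<and> \<not> is_tree V (pi_edges V E \<pi>)"
proof -
  have sub: "subgraph W F V E" and bc: "biconn_candidate W F"
    using block unfolding is_block_def by auto
  have FE: "F \<subseteq> E" using sub unfolding subgraph_def by auto
  obtain u v where uv: "u \<in> W" "v \<in> W" "u \<noteq> v" "{u, v} \<notin> F"
    using \<open>\<not> is_clique W F\<close> unfolding is_clique_def by blast
  have "{u, v} \<notin> E" using block_contains_induced_edge[OF block uv(1,2)] uv(4) by blast
  moreover have "reach F u v" using bc uv unfolding biconn_candidate_def connected_graph_def by blast
  ultimately obtain b d where bd: "b \<in> W" "d \<in> W" "{u, b} \<in> E" "{b, d} \<in> E" "{u, d} \<notin> E" "u \<noteq> d"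
    using exists_induced_two_path[OF sub] uv(3) by blast
  have "b \<noteq> u" "b \<noteq> d" using simple_graph_edgeD[OF sg bd(3)] simple_graph_edgeD[OF sg bd(4)] by auto
  have reach_F: "reach {e \<in> F. b \<notin> e} u d"
    using bc uv(1) bd(1,2) \<open>b \<noteq> u\<close> \<open>b \<noteq> d\<close>
    unfolding biconn_candidate_def has_cut_vertex_def by blast
  obtain \<pi> :: "'a \<Rightarrow> nat" where inj: "inj_on \<pi> V" and \<pi>: "\<pi> u = 0" "\<pi> d = 1"
    and top: "\<forall>x\<in>V. \<pi> x \<le> \<pi> b"
    using exists_labelling_with_prescribed_ends[OF fin bd(6) \<open>b \<noteq> u\<close> \<open>b \<noteq> d\<close>] by blast
  have "reach {e \<in> pi_edges V E \<pi>. e \<inter> {b} = {}} u d"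
    by (rule reach_lift[OF _ reach_F]) (use reach_pi_edges_avoiding[OF sg inj, of "{b}"] top FE in auto)
  moreover have "{e \<in> pi_edges V E \<pi>. e \<inter> {b} = {}} = {e \<in> pi_edges V E \<pi>. b \<notin> e}"
    by blast
  ultimately have reach_pi: "reach {e \<in> pi_edges V E \<pi>. b \<notin> e} u d"
    by simp
  have "u \<in> V" "d \<in> V" using sub bd(3,4) simple_graph_edgeD[OF sg] by blast+
  then have above_u: "0 < \<pi> w" and above_d: "w \<noteq> d \<Longrightarrow> 1 < \<pi> w"
    if "w \<in> V" "w \<noteq> u" for w
    using inj_on_contraD[OF inj that(2) that(1) \<open>u \<in> V\<close>] inj_on_contraD[OF inj _ that(1) \<open>d \<in> V\<close>] \<pi>
    by auto
  have "good V E \<pi> u b" "good V E \<pi> d b"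
    unfolding good_def nbhd_def
    using \<pi> bd \<open>b \<noteq> u\<close> \<open>b \<noteq> d\<close> simple_graph_edgeD[OF sg] above_u above_d
    by (auto simp: insert_commute) (metis insert_commute)
  then have "has_cycle (pi_edges V E \<pi>)"
    using has_cycle_if_reach_avoiding[OF reach_pi bd(6) _ _ \<open>b \<noteq> u\<close> \<open>b \<noteq> d\<close>]
    by (auto dest!: good_imp_pi_edge simp: insert_commute)
  then show ?thesis using inj unfolding is_tree_def by blast
qed

subsection \<open>Cycles lie in blocks\<close>

definition cycle_edges :: "'a list \<Rightarrow> 'a set set" where
  "cycle_edges xs = {{xs ! i, xs ! (Suc i mod length xs)} | i. i < length xs}"

lemma cycle_edges_nth: "i < length xs \<Longrightarrow> {xs ! i, xs ! (Suc i mod length xs)} \<in> cycle_edges xs"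
  unfolding cycle_edges_def by blast

lemma cycle_edges_subset_set: "e \<in> cycle_edges xs \<Longrightarrow> e \<subseteq> set xs"
  unfolding cycle_edges_def by (auto intro!: nth_mem mod_less_divisor)

lemma has_cycle_imp_cycle_edges:
  assumes "has_cycle P"
  shows "\<exists>xs. 3 \<le> length xs \<and> distinct xs \<and> cycle_edges xs \<subseteq> P"
proof -
  obtain xs where xs: "length xs \<ge> 3" "distinct xs" "\<forall>i < length xs - 1. {xs ! i, xs ! (i + 1)} \<in> P"
    "{last xs, hd xs} \<in> P"
    using assms unfolding has_cycle_def by blast
  have "{xs ! i, xs ! (Suc i mod length xs)} \<in> P" if "i < length xs" for i
  proof (cases "i < length xs - 1")
    case True
    then show ?thesis using xs(3) by simp
  next
    case False
    then have "i = length xs - 1" using that by simp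
    moreover have "xs \<noteq> []" using xs(1) by auto
    ultimately show ?thesis using xs(4) by (simp add: last_conv_nth hd_conv_nth)
  qed
  then show ?thesis using xs(1,2) unfolding cycle_edges_def by blast
qed

lemma cycle_no_cut_vertex:
  assumes "3 \<le> length xs" and "distinct xs"
  shows "\<not> has_cut_vertex (set xs) (cycle_edges xs)"
proof
  let ?n = "length xs"
  assume "has_cut_vertex (set xs) (cycle_edges xs)"
  then obtain x u v where x: "x \<in> set xs" "u \<in> set xs - {x}" "v \<in> set xs - {x}"
    and not_reach: "\<not> reach {e \<in> cycle_edges xs. x \<notin> e} u v"
    unfolding has_cut_vertex_def by blast
  let ?R = "{e \<in> cycle_edges xs. x \<notin> e}"
  obtain k where k: "k < ?n" "xs ! k = x" using x(1) by (auto simp: in_set_conv_nth)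
  \<comment> \<open>rotate the cycle so that x comes last; the remaining list is a path avoiding x\<close>
  define ys where "ys = rotate (Suc k) xs"
  have ys: "length ys = ?n" "distinct ys" "set ys = set xs"
    unfolding ys_def using assms(2) by simp_all
  have ys_nth: "ys ! i = xs ! ((Suc k + i) mod ?n)" if "i < ?n" for i
    unfolding ys_def using that by (rule nth_rotate)
  have "Suc k + (?n - 1) = k + ?n" using assms(1) by linarith
  then have "ys ! (?n - 1) = x"
    using ys_nth[of "?n - 1"] k assms(1) by simp
  then have ys_not_x: "ys ! i \<noteq> x" if "i < ?n - 1" for i
    using that ys(1) nth_eq_iff_index_eq[OF ys(2), of i "?n - 1"] by auto
  have path_edge: "{ys ! i, ys ! Suc i} \<in> ?R" if "Suc i < ?n - 1" for i
  proof -
    have "ys ! Suc i = xs ! (Suc ((Suc k + i) mod ?n) mod ?n)"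
      using ys_nth[of "Suc i"] that by (simp add: mod_Suc_eq)
    moreover have "(Suc k + i) mod ?n < ?n" using assms(1) by (intro mod_less_divisor) linarith
    ultimately have "{ys ! i, ys ! Suc i} \<in> cycle_edges xs"
      using ys_nth[of i] that cycle_edges_nth by fastforce
    then show ?thesis using ys_not_x[of i] ys_not_x[of "Suc i"] that by fastforce
  qed
  have from_start: "reach ?R (ys ! 0) w" if "w \<in> set xs - {x}" for w
  proof -
    have "w \<in> set ys" using that ys(3) by simp
    then obtain i where i: "i < ?n" "ys ! i = w" using ys(1) by (metis in_set_conv_nth)
    then have "i < ?n - 1" using \<open>ys ! (?n - 1) = x\<close> that by (cases "i = ?n - 1") auto
    have "reach ?R (ys ! 0) (ys ! i)"
      by (rule reach_along_nth, rule path_edge) (use \<open>i < ?n - 1\<close> in linarith)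
    then show ?thesis using i(2) by simp
  qed
  have "reach ?R u v" using reach_trans[OF reach_sym[OF from_start[OF x(2)]] from_start[OF x(3)]] .
  then show False using not_reach by blast
qed

lemma cycle_biconn_candidate:
  assumes "3 \<le> length xs" and "distinct xs"
  shows "biconn_candidate (set xs) (cycle_edges xs)"
proof -
  have no_cut: "\<not> has_cut_vertex (set xs) (cycle_edges xs)"
    using cycle_no_cut_vertex[OF assms] .
  have "reach (cycle_edges xs) u v" if "u \<in> set xs" "v \<in> set xs" for u v
  proof (cases "u = v")
    case False
    have "card (set xs) \<ge> 3" using assms by (simp add: distinct_card)
    moreover have "card {u, v} \<le> 2" by (simp add: card_insert_le_m1)
    ultimately have "\<not> set xs \<subseteq> {u, v}" using card_mono[of "{u, v}" "set xs"] by auto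
    then obtain x where "x \<in> set xs" "x \<noteq> u" "x \<noteq> v" by blast
    then have "reach {e \<in> cycle_edges xs. x \<notin> e} u v"
      using no_cut that unfolding has_cut_vertex_def by blast
    then show ?thesis by (rule reach_mono[rotated]) auto
  qed simp
  moreover have "set xs \<noteq> {}" using assms(1) by auto
  ultimately show ?thesis using no_cut unfolding biconn_candidate_def connected_graph_def by blast
qed

lemma biconn_candidate_imp_block:
  assumes fin: "finite V" and sg: "simple_graph V E"
    and "subgraph W\<^sub>0 F\<^sub>0 V E" and "biconn_candidate W\<^sub>0 F\<^sub>0"
  shows "\<exists>W F. is_block V E W F \<and> W\<^sub>0 \<subseteq> W \<and> F\<^sub>0 \<subseteq> F"
proof -
  have "E \<subseteq> Pow V" using sg unfolding simple_graph_def by auto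
  then have finE: "finite E" using fin by (simp add: finite_subset)
  define S where "S = (\<lambda>(W, F). subgraph W F V E \<and> biconn_candidate W F \<and> W\<^sub>0 \<subseteq> W \<and> F\<^sub>0 \<subseteq> F)"
  define size :: "'a set \<times> 'a set set \<Rightarrow> nat" where "size = (\<lambda>(W, F). card W + card F)"
  have "S (W\<^sub>0, F\<^sub>0)" unfolding S_def using assms(3,4) by simp
  moreover have "\<forall>y. S y \<longrightarrow> size y < card V + card E + 1"
    unfolding S_def size_def subgraph_def
    using fin finE by (auto simp: card_mono less_Suc_eq_le add_mono)
  ultimately obtain W F where WF: "S (W, F)" and max: "\<forall>y. S y \<longrightarrow> size y \<le> size (W, F)"
    using ex_has_greatest_nat[of S _ size] by (metis surj_pair)
  have "is_block V E W F"
    unfolding is_block_def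
  proof (intro conjI allI impI)
    show "subgraph W F V E" "biconn_candidate W F" using WF unfolding S_def by auto
    fix W' F' assume bigger: "subgraph W' F' V E \<and> biconn_candidate W' F' \<and> W \<subseteq> W' \<and> F \<subseteq> F'"
    then have "S (W', F')" using WF unfolding S_def by auto
    then have le: "card W' + card F' \<le> card W + card F" using max unfolding size_def by fastforce
    have "finite W'" "finite F'"
      using bigger fin finE unfolding subgraph_def by (auto intro: finite_subset)
    moreover have "card W \<le> card W'" "card F \<le> card F'"
      using bigger \<open>finite W'\<close> \<open>finite F'\<close> by (auto intro: card_mono)
    ultimately have "card W' = card W" "card F' = card F" using le by linarith+
    then show "W' = W" "F' = F"
      using bigger \<open>finite W'\<close> \<open>finite F'\<close> card_subset_eq by metis+
  qed
  then show ?thesis using WF unfolding S_def by auto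
qed

subsection \<open>Acyclicity of G^(pi) when all blocks are cliques\<close>

lemma clique_block_pi_edge_contains_least:
  assumes block: "is_block V E W F" and clique: "is_clique W F"
    and edge: "{p, q} \<in> pi_edges V E \<pi>" and "p \<in> W" "q \<in> W"
  shows "\<exists>r\<in>{p, q}. \<forall>w\<in>W - {r}. \<pi> r < \<pi> w"
proof -
  obtain u v where uv: "{p, q} = {u, v}" "good V E \<pi> u v"
    using edge unfolding pi_edges_def by blast
  have "u \<in> W" "v \<in> W" using uv(1) \<open>p \<in> W\<close> \<open>q \<in> W\<close> by (auto simp: doubleton_eq_iff)
  have "W \<subseteq> V" "F \<subseteq> E" using block unfolding is_block_def subgraph_def by auto
  have "\<pi> u < \<pi> w" if "w \<in> W - {u}" for w
  proof (cases "w = v")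
    case False
    \<comment> \<open>in a clique every other vertex is a common neighbour of u and v\<close>
    then have "w \<in> nbhd V E u \<inter> nbhd V E v"
      using clique that \<open>u \<in> W\<close> \<open>v \<in> W\<close> \<open>W \<subseteq> V\<close> \<open>F \<subseteq> E\<close>
      unfolding is_clique_def nbhd_def by auto
    then show ?thesis using uv(2) unfolding good_def by blast
  qed (use uv(2) in \<open>simp add: good_def\<close>)
  then show ?thesis using uv(1) by blast
qed

lemma pi_edges_acyclic:
  assumes fin: "finite V" and sg: "simple_graph V E"
    and cliques: "\<forall>W F. is_block V E W F \<longrightarrow> is_clique W F"
  shows "\<not> has_cycle (pi_edges V E \<pi>)"
proof
  assume "has_cycle (pi_edges V E \<pi>)"
  then obtain xs where xs: "3 \<le> length xs" "distinct xs" "cycle_edges xs \<subseteq> pi_edges V E \<pi>"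
    using has_cycle_imp_cycle_edges by blast
  let ?n = "length xs"
  have cycle_E: "cycle_edges xs \<subseteq> E" using xs(3) pi_edges_subset by blast
  have "set xs \<subseteq> V"
  proof
    fix z assume "z \<in> set xs"
    then obtain i where "i < ?n" "xs ! i = z" by (meson in_set_conv_nth)
    then show "z \<in> V" using cycle_edges_nth[of i xs] cycle_E simple_graph_edgeD[OF sg] by blast
  qed
  then have "subgraph (set xs) (cycle_edges xs) V E"
    unfolding subgraph_def using cycle_E cycle_edges_subset_set by blast
  then obtain W F where block: "is_block V E W F" and "set xs \<subseteq> W"
    using biconn_candidate_imp_block[OF fin sg _ cycle_biconn_candidate[OF xs(1,2)]] by blast
  define least where "least r \<longleftrightarrow> r \<in> W \<and> (\<forall>w\<in>W - {r}. \<pi> r < \<pi> w)" for r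
  have least_unique: "r = r'" if "least r" "least r'" for r r'
    using that unfolding least_def by (metis DiffI less_asym singletonD)
  have edge_least: "\<exists>r\<in>{xs ! i, xs ! (Suc i mod ?n)}. least r" if "i < ?n" for i
  proof -
    have "xs ! i \<in> W" "xs ! (Suc i mod ?n) \<in> W"
      using that \<open>set xs \<subseteq> W\<close> cycle_edges_subset_set[OF cycle_edges_nth[OF that]] by auto
    then show ?thesis
      using clique_block_pi_edge_contains_least[OF block _ subsetD[OF xs(3) cycle_edges_nth[OF that]]]
        cliques block unfolding least_def by blast
  qed
  \<comment> \<open>the edges x0x1, x1x2 and x(n-1)x0 would all contain the least vertex of W\<close>
  have bounds: "0 < ?n" "1 < ?n" "2 < ?n" "?n - 1 < ?n" "Suc (?n - 1) = ?n" using xs(1) by arith+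
  obtain r1 where r1: "r1 \<in> {xs ! 0, xs ! 1}" "least r1"
    using edge_least[of 0] bounds by auto
  obtain r2 where r2: "r2 \<in> {xs ! 1, xs ! 2}" "least r2"
    using edge_least[of 1] bounds by (auto simp: numeral_2_eq_2)
  obtain r3 where r3: "r3 \<in> {xs ! (?n - 1), xs ! 0}" "least r3"
    using edge_least[of "?n - 1"] bounds by auto
  have "r1 = r2" "r1 = r3" using least_unique r1 r2 r3 by blast+
  moreover have "xs ! 0 \<noteq> xs ! 1" "xs ! 0 \<noteq> xs ! 2" "xs ! 1 \<noteq> xs ! 2"
    "xs ! 1 \<noteq> xs ! (?n - 1)" "xs ! 0 \<noteq> xs ! (?n - 1)"
    using bounds xs(1) by (auto simp: nth_eq_iff_index_eq[OF xs(2)])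
  ultimately show False using r1(1) r2(1) r3(1) by auto
qed

theorem lemma2:
  fixes V :: "'a set" and E :: "'a set set"
  assumes "finite V" and "simple_graph V E" and "connected_graph V E"
  shows "(\<forall>\<pi> :: 'a \<Rightarrow> nat. inj_on \<pi> V \<longrightarrow> is_tree V (pi_edges V E \<pi>))
     \<longleftrightarrow> (\<forall>W F. is_block V E W F \<longrightarrow> is_clique W F)"
proof
  assume "\<forall>\<pi> :: 'a \<Rightarrow> nat. inj_on \<pi> V \<longrightarrow> is_tree V (pi_edges V E \<pi>)"
  then show "\<forall>W F. is_block V E W F \<longrightarrow> is_clique W F"
    using nonclique_block_imp_not_tree[OF assms(1,2)] by blast
next
  assume "\<forall>W F. is_block V E W F \<longrightarrow> is_clique W F"
  then show "\<forall>\<pi> :: 'a \<Rightarrow> nat. inj_on \<pi> V \<longrightarrow> is_tree V (pi_edges V E \<pi>)"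
    using pi_edges_acyclic[OF assms(1,2)] connected_pi_edges[OF assms(2) _ assms(3)]
    unfolding is_tree_def by blast
qed

end
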